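(* Let $a,b\in\mathbb F_{q^2}^*$, integers $0<i_1<i_2<(q+1)/d$ and $0\le j_1,j_2<d$, and for $0\le k<d$ put $L_k(X)=1+a\epsilon^{j_1k}X^{i_1}+b\epsilon^{j_2k}X^{i_2}$. If for some $0\le k<d$ there exists $\lambda_k\in\mu_{q+1}$ with $L_k\in\mathcal L_k(i_2,0;\lambda_k)$, then $i_1=i_2/2$, $b=a^{1-q}\epsilon^{(2j_1-j_2)k}$, $\lambda_k=b^q\epsilon^{-j_2k}$, and $\lambda_k^{(q+1)/d}=\epsilon^{-2j_1k(q+1)/d+\alpha}$, where $\alpha\in\mathbb Z/d\mathbb Z$ is defined by $a^{(q^2-1)/d}=\epsilon^\alpha$.
   Context: $q$ is a prime power, $d$ is a positive divisor of $q+1$, and $\epsilon\in\mathbb F_{q^2}^*$ has multiplicative order $d$. $\mu_{q+1}$ is the subgroup of order $q+1$ of $\mathbb F_{q^2}^*$. For $a\in\mathbb F_{q^2}$, $\bar a=a^q$; for $f(X)=\sum_{i=0}^n a_iX^i\in\mathbb F_{q^2}[X]$ with $a_n\neq0$, $\tilde f(X)=\sum_{i=0}^n\bar a_iX^{n-i}$. For $0\le k<d$, $0\le t<(q+1)/d$ and $\lambda\in\mu_{q+1}$, $\mathcal L_k(t,0;\lambda)$ is the set of $L\in\mathbb F_{q^2}[X]$ with $\deg L=t$, $\tilde L=\lambda L$ and $\gcd(L,X^{(q+1)/d}-\epsilon^k)=1$. *)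

theory Defs
  imports "HOL-Computational_Algebra.Computational_Algebra"
begin

text \<open>The field F_{q^2} is modelled by a finite field type of cardinality q^2;
  conjugation is the Frobenius x -> x^q.\<close>

definition tilde :: "nat \<Rightarrow> 'a::field poly \<Rightarrow> 'a poly" where
  "tilde q f = (\<Sum>i\<le>degree f. monom ((coeff f i) ^ q) (degree f - i))"

definition mu :: "nat \<Rightarrow> 'a::field set" where
  "mu q = {x. x ^ (q + 1) = 1}"

definition calL :: "nat \<Rightarrow> nat \<Rightarrow> 'a::field \<Rightarrow> nat \<Rightarrow> nat \<Rightarrow> 'a \<Rightarrow> 'a poly set" where
  "calL q d \<epsilon> k t lam = {L. degree L = t \<and> tilde q L = smult lam L \<and>
       coprime L (monom 1 ((q + 1) div d) - [:\<epsilon> ^ k:])}"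

end

theory Submission
  imports Defs
begin

text \<open>Comparing coefficients in \<open>\<tilde>L = \<lambda>L\<close> for \<open>L = 1 + A X\<^sup>i\<^sup>1 + B X\<^sup>i\<^sup>2\<close>: the constant
  and leading terms give \<open>\<lambda> = B\<^sup>q\<close> and \<open>\<lambda>B = 1\<close>, and the middle term of \<open>\<tilde>L\<close> lies in
  degree \<open>i2 - i1\<close>, so it must match the middle term of \<open>L\<close>, forcing \<open>i2 = 2 i1\<close> and
  \<open>A\<^sup>q = \<lambda>A\<close>. Substituting \<open>A = a \<epsilon>\<^sup>j\<^sup>1\<^sup>k\<close> and \<open>B = b \<epsilon>\<^sup>j\<^sup>2\<^sup>k\<close> gives the claims, because
  \<open>d | q + 1\<close> puts every power of \<open>\<epsilon>\<close> into \<open>\<mu>\<^sub>q\<^sub>+\<^sub>1\<close>, where \<open>x\<^sup>q = x\<^sup>-\<^sup>1\<close>.\<close>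

lemma coeff_tilde:
  "coeff (tilde q f) n = (if n \<le> degree f then coeff f (degree f - n) ^ q else 0)"
proof -
  have "coeff (tilde q f) n =
      (\<Sum>i\<le>degree f. if i = degree f - n \<and> n \<le> degree f then coeff f i ^ q else 0)"
    unfolding tilde_def coeff_sum coeff_monom by (rule sum.cong) auto
  also have "\<dots> = (if n \<le> degree f then coeff f (degree f - n) ^ q else 0)"
    by (cases "n \<le> degree f") (auto simp: sum.delta')
  finally show ?thesis .
qed

lemma tilde_trinomial_eq_smultD:
  fixes A B lam :: "'a::field" and i1 i2 q :: nat
  defines "L \<equiv> [:1:] + monom A i1 + monom B i2"
  assumes "A \<noteq> 0" and "B \<noteq> 0" and "0 < i1" and "i1 < i2" and "0 < q"
    and self_reciprocal: "tilde q L = smult lam L"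
  shows "i2 = 2 * i1" and "lam = B ^ q" and "lam * B = 1" and "A ^ q = lam * A"
proof -
  have coeff_L: "coeff L n = (if n = 0 then 1 else 0) + (if n = i1 then A else 0)
      + (if n = i2 then B else 0)" for n
    by (cases n) (auto simp: L_def coeff_monom)
  have "degree ([:1:] + monom A i1) < i2"
    using degree_monom_le[of A i1] \<open>i1 < i2\<close> by (intro degree_add_less) simp_all
  then have degree_L: "degree L = i2"
    using \<open>B \<noteq> 0\<close> by (simp add: L_def degree_add_eq_right degree_monom_eq)
  have coeff_eq: "coeff (tilde q L) n = lam * coeff L n" for n
    using self_reciprocal by simp
  show "lam * B = 1"
    using coeff_eq[of i2] \<open>0 < i1\<close> \<open>i1 < i2\<close> by (simp add: coeff_tilde degree_L coeff_L)
  show "lam = B ^ q"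
    using coeff_eq[of 0] \<open>0 < i1\<close> \<open>i1 < i2\<close> \<open>0 < q\<close> by (simp add: coeff_tilde degree_L coeff_L)
  have middle: "A ^ q = lam * coeff L (i2 - i1)"
    using coeff_eq[of "i2 - i1"] \<open>0 < i1\<close> \<open>i1 < i2\<close> by (simp add: coeff_tilde degree_L coeff_L)
  show "i2 = 2 * i1"
  proof (rule ccontr)
    assume "i2 \<noteq> 2 * i1"
    then have "coeff L (i2 - i1) = 0" using \<open>0 < i1\<close> \<open>i1 < i2\<close> by (simp add: coeff_L; linarith)
    with middle \<open>A \<noteq> 0\<close> \<open>0 < q\<close> show False by simp
  qed
  with middle \<open>0 < i1\<close> show "A ^ q = lam * A" by (simp add: coeff_L)
qed

lemma mu_power_eq_inverse:
  fixes x :: "'a::field"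
  assumes "x \<in> mu q"
  shows "x ^ q = inverse x"
  using assms by (intro inverse_unique[symmetric]) (simp add: mu_def)

lemma mu_power_pred_eq:
  fixes x :: "'a::field"
  assumes "x \<in> mu q" and "0 < q"
  shows "x ^ (q - 1) = inverse x ^ 2"
proof -
  have "x \<noteq> 0" using assms(1) by (auto simp: mu_def)
  have "x ^ (q - 1) * x = inverse x"
    using mu_power_eq_inverse[OF assms(1)] by (simp only: power_minus_mult[OF \<open>0 < q\<close>])
  with \<open>x \<noteq> 0\<close> show ?thesis by (simp add: field_simps power2_eq_square)
qed

lemma power_in_mu:
  fixes e :: "'a::field"
  assumes "e ^ d = 1" and "d dvd q + 1"
  shows "e ^ n \<in> mu q"
proof -
  obtain c where "q + 1 = d * c" using assms(2) by blast
  then have "(e ^ n) ^ (q + 1) = ((e ^ d) ^ c) ^ n" by (simp flip: power_mult add: mult_ac)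
  with assms(1) show ?thesis by (simp add: mu_def)
qed

lemma power_mult_inverse_power:
  fixes e :: "'a::field"
  assumes "e \<noteq> 0"
  shows "e ^ m * inverse (e ^ n) = e powi (int m - int n)"
  using assms by (simp add: power_int_diff divide_inverse)

lemma power2_minus_1_div:
  fixes q d :: nat
  assumes "d dvd q + 1"
  shows "(q ^ 2 - 1) div d = (q - 1) * ((q + 1) div d)"
proof -
  have "q ^ 2 - 1 = (q - 1) * (q + 1)" by (cases q) (simp_all add: power2_eq_square)
  with assms show ?thesis by (simp add: div_mult_swap)
qed

lemma tilde_twisted_trinomial_eq_smultD:
  fixes a b \<eta> \<zeta> lam :: "'a::field" and i1 i2 q :: nat
  defines "L \<equiv> [:1:] + monom (a * \<eta>) i1 + monom (b * \<zeta>) i2"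
  assumes "\<eta> \<in> mu q" and "\<zeta> \<in> mu q" and "a \<noteq> 0" and "b \<noteq> 0"
    and "0 < i1" and "i1 < i2" and "0 < q"
    and "tilde q L = smult lam L"
  shows "i2 = 2 * i1"
    and "lam = a ^ (q - 1) * inverse \<eta> ^ 2"
    and "lam = b ^ q * inverse \<zeta>"
    and "b = inverse (a ^ (q - 1)) * \<eta> ^ 2 * inverse \<zeta>"
proof -
  have "\<eta> \<noteq> 0" and "\<zeta> \<noteq> 0" using assms(2,3) by (auto simp: mu_def)
  with assms(4,5) have "a * \<eta> \<noteq> 0" and "b * \<zeta> \<noteq> 0" by simp_all
  note trinomial = tilde_trinomial_eq_smultD[OF this assms(6-9)[unfolded L_def]]
  show "i2 = 2 * i1" by (fact trinomial(1))
  have "(a * \<eta>) ^ (q - 1) * (a * \<eta>) = lam * (a * \<eta>)"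
    using trinomial(4) by (simp only: power_minus_mult[OF \<open>0 < q\<close>])
  then have "lam = (a * \<eta>) ^ (q - 1)" using \<open>a * \<eta> \<noteq> 0\<close> by simp
  then show lam_a: "lam = a ^ (q - 1) * inverse \<eta> ^ 2"
    by (simp only: power_mult_distrib mu_power_pred_eq[OF assms(2,8)])
  show "lam = b ^ q * inverse \<zeta>"
    using trinomial(2) by (simp add: power_mult_distrib mu_power_eq_inverse[OF assms(3)])
  show "b = inverse (a ^ (q - 1)) * \<eta> ^ 2 * inverse \<zeta>"
    using trinomial(3) \<open>\<eta> \<noteq> 0\<close> \<open>\<zeta> \<noteq> 0\<close> \<open>a \<noteq> 0\<close> by (simp add: lam_a field_simps)
qed

theorem lemma4p4:
  fixes q d i1 i2 j1 j2 k :: nat and \<epsilon> a b lam :: "'a::{field,finite}"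
  assumes "\<exists>p n. prime p \<and> n > 0 \<and> q = p ^ n"
    and "card (UNIV :: 'a set) = q ^ 2"
    and "d > 0" and "d dvd q + 1"
    and "\<epsilon> ^ d = 1" and "\<forall>m. 0 < m \<and> m < d \<longrightarrow> \<epsilon> ^ m \<noteq> 1"
    and "a \<noteq> 0" and "b \<noteq> 0"
    and "0 < i1" and "i1 < i2" and "i2 < (q + 1) div d"
    and "j1 < d" and "j2 < d" and "k < d"
    and "lam \<in> mu q"
    and "[:1:] + monom (a * \<epsilon> ^ (j1 * k)) i1 + monom (b * \<epsilon> ^ (j2 * k)) i2
           \<in> calL q d \<epsilon> k i2 lam"
  shows "i2 = 2 * i1
    \<and> b = a powi (1 - int q) * \<epsilon> powi ((2 * int j1 - int j2) * int k)
    \<and> lam = b ^ q * \<epsilon> powi (- (int j2 * int k))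
    \<and> (\<forall>\<alpha>::int. a ^ ((q ^ 2 - 1) div d) = \<epsilon> powi \<alpha> \<longrightarrow>
         lam ^ ((q + 1) div d) = \<epsilon> powi (- (2 * int j1 * int k * int ((q + 1) div d)) + \<alpha>))"
proof -
  define m where "m = (q + 1) div d"
  have "0 < q" using assms(1) by (auto intro: prime_gt_0_nat)
  have "\<epsilon> \<noteq> 0" using assms(3,5) by (metis power_0_left zero_neq_one not_gr0)
  have "tilde q ([:1:] + monom (a * \<epsilon> ^ (j1 * k)) i1 + monom (b * \<epsilon> ^ (j2 * k)) i2)
      = smult lam ([:1:] + monom (a * \<epsilon> ^ (j1 * k)) i1 + monom (b * \<epsilon> ^ (j2 * k)) i2)"
    using assms(16) by (simp add: calL_def)
  note twisted = tilde_twisted_trinomial_eq_smultD[OF power_in_mu[OF assms(5,4)]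
      power_in_mu[OF assms(5,4)] assms(7-10) \<open>0 < q\<close> this]
  have inverse_power: "inverse (x ^ n) = x powi (- int n)" for x :: 'a and n
    by (simp add: power_int_minus)
  have "1 - int q = - int (q - 1)" using \<open>0 < q\<close> by (simp add: of_nat_diff)
  then have "inverse (a ^ (q - 1)) = a powi (1 - int q)" by (simp only: inverse_power)
  moreover have "(\<epsilon> ^ (j1 * k)) ^ 2 * inverse (\<epsilon> ^ (j2 * k)) = \<epsilon> powi (int (j1 * k * 2) - int (j2 * k))"
    by (simp only: power_mult[symmetric] power_mult_inverse_power[OF \<open>\<epsilon> \<noteq> 0\<close>])
  moreover have "int (j1 * k * 2) - int (j2 * k) = (2 * int j1 - int j2) * int k"
    by (simp add: algebra_simps)
  ultimately have b: "b = a powi (1 - int q) * \<epsilon> powi ((2 * int j1 - int j2) * int k)"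
    using twisted(4) by (simp only: mult.assoc)
  have lam: "lam = b ^ q * \<epsilon> powi (- (int j2 * int k))"
    using twisted(3) by (simp only: inverse_power of_nat_mult)
  have "lam ^ m = a ^ ((q - 1) * m) * inverse (\<epsilon> ^ (j1 * k * 2 * m))"
    using twisted(2) by (simp only: power_mult_distrib power_inverse flip: power_mult)
  moreover have "- int (j1 * k * 2 * m) = - (2 * int j1 * int k * int m)" by simp
  ultimately have "lam ^ m = a ^ ((q ^ 2 - 1) div d) * \<epsilon> powi (- (2 * int j1 * int k * int m))"
    by (simp only: inverse_power power2_minus_1_div[OF assms(4)] m_def)
  then have "lam ^ m = \<epsilon> powi (- (2 * int j1 * int k * int m) + \<alpha>)"
    if "a ^ ((q ^ 2 - 1) div d) = \<epsilon> powi \<alpha>" for \<alpha>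
    using that power_int_add[OF disjI1, OF \<open>\<epsilon> \<noteq> 0\<close>] by (simp only: mult.commute)
  with twisted(1) b lam show ?thesis by (simp add: m_def)
qed

end
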